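(* Let $\beta=(\beta_n)_{n\ge0}$ be a sequence of positive numbers with $\liminf_n\beta_n^{1/n}\ge1$. If for some $a\in(0,1)$ the map $T_a$ induces a bounded composition operator $C_{T_a}$ on $H^2(\beta)$, then $\beta$ has a polynomial minoration.
   Context: $H^2(\beta)$ is the Hilbert space of analytic functions $f(z)=\sum_{n\ge0}a_nz^n$ on the unit disk $\mathbb D$ with $\|f\|^2=\sum_{n\ge0}|a_n|^2\beta_n<\infty$. For $a\in\mathbb D$, $T_a(z)=\frac{a+z}{1+\bar a z}$, and $C_{T_a}f=f\circ T_a$. $\beta$ has a polynomial minoration if there are constants $\delta,\alpha>0$ with $\beta_n\ge\delta n^{-\alpha}$ for all integers $n\ge1$. *)

theory Defs
  imports "HOL-Complex_Analysis.Complex_Analysis" "HOL-Library.Liminf_Limsup"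
begin

definition h2_coeff :: "(complex \<Rightarrow> complex) \<Rightarrow> nat \<Rightarrow> complex" where
  "h2_coeff f n = (deriv ^^ n) f 0 / of_nat (fact n)"

definition in_H2 :: "(nat \<Rightarrow> real) \<Rightarrow> (complex \<Rightarrow> complex) \<Rightarrow> bool" where
  "in_H2 \<beta> f \<longleftrightarrow> f holomorphic_on ball 0 1 \<and>
     summable (\<lambda>n. (cmod (h2_coeff f n))\<^sup>2 * \<beta> n)"

definition h2_norm :: "(nat \<Rightarrow> real) \<Rightarrow> (complex \<Rightarrow> complex) \<Rightarrow> real" where
  "h2_norm \<beta> f = sqrt (\<Sum>n. (cmod (h2_coeff f n))\<^sup>2 * \<beta> n)"

definition T_aut :: "complex \<Rightarrow> complex \<Rightarrow> complex" where
  "T_aut a z = (a + z) / (1 + cnj a * z)"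

definition bounded_comp_op :: "(nat \<Rightarrow> real) \<Rightarrow> (complex \<Rightarrow> complex) \<Rightarrow> bool" where
  "bounded_comp_op \<beta> \<phi> \<longleftrightarrow>
     (\<forall>f. in_H2 \<beta> f \<longrightarrow> in_H2 \<beta> (f \<circ> \<phi>)) \<and>
     (\<exists>C. \<forall>f. in_H2 \<beta> f \<longrightarrow> h2_norm \<beta> (f \<circ> \<phi>) \<le> C * h2_norm \<beta> f)"

definition polynomial_minoration :: "(nat \<Rightarrow> real) \<Rightarrow> bool" where
  "polynomial_minoration \<beta> \<longleftrightarrow>
     (\<exists>\<delta> \<alpha>. \<delta> > 0 \<and> \<alpha> > 0 \<and> (\<forall>n::nat. n \<ge> 1 \<longrightarrow> \<beta> n \<ge> \<delta> * real n powr (-\<alpha>)))"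

end

theory Submission imports Defs begin

text \<open>Evaluation at 0 is bounded on \<open>H\<^sup>2(\<beta>)\<close>: \<open>|f(0)| \<surd>\<beta>\<^sub>0 \<le> \<parallel>f\<parallel>\<close>.
  If \<open>C\<^sub>T\<^sub>a\<close> has norm at most \<open>K\<close>, then testing \<open>C\<^sub>T\<^sub>a\<^sup>m\<close> on the monomial \<open>z\<^sup>n\<close> gives
  \<open>r\<^sub>m\<^sup>n \<surd>\<beta>\<^sub>0 \<le> K\<^sup>m \<surd>\<beta>\<^sub>n\<close>, where \<open>r\<^sub>m = T\<^sub>a\<^sup>m(0)\<close> is real and satisfies \<open>1 - r\<^sub>m \<le> (1 - a)\<^sup>m\<close>.
  Choosing \<open>m \<approx> log(2n) / log(1/(1-a))\<close> makes \<open>r\<^sub>m\<^sup>n \<ge> 1/2\<close> by Bernoulli's inequality,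
  while \<open>K\<^sup>m\<close> grows only polynomially in \<open>n\<close>.\<close>

lemma h2_coeff_power: "h2_coeff (\<lambda>z. z ^ n) k = (if k = n then 1 else 0)"
proof -
  have "eval_fps (fps_X ^ n) = (\<lambda>z::complex. z ^ n)"
    by auto
  then show ?thesis
    using fps_nth_conv_deriv[of "fps_X ^ n" k] by (simp add: h2_coeff_def)
qed

lemma h2_norm_series_power: "(\<lambda>k. (cmod (h2_coeff (\<lambda>z. z ^ n) k))\<^sup>2 * \<beta> k) sums \<beta> n"
proof -
  have "(\<lambda>k. (cmod (h2_coeff (\<lambda>z. z ^ n) k))\<^sup>2 * \<beta> k) = (\<lambda>k. if k = n then \<beta> k else 0)"
    by (auto simp: h2_coeff_power)
  then show ?thesis
    by (simp add: sums_single)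
qed

lemma in_H2_power: "in_H2 \<beta> (\<lambda>z. z ^ n)"
  using h2_norm_series_power[of n \<beta>] by (auto simp: in_H2_def sums_summable intro!: holomorphic_intros)

lemma h2_norm_power: "h2_norm \<beta> (\<lambda>z. z ^ n) = sqrt (\<beta> n)"
  using h2_norm_series_power sums_unique unfolding h2_norm_def by metis

lemma h2_norm_nonneg:
  assumes "\<And>n. \<beta> n \<ge> 0" and "in_H2 \<beta> f"
  shows "h2_norm \<beta> f \<ge> 0"
  using assms unfolding h2_norm_def in_H2_def by (simp add: suminf_nonneg)

lemma h2_norm_ge_value_at_0:
  assumes "\<And>n. \<beta> n \<ge> 0" and "in_H2 \<beta> f"
  shows "cmod (f 0) * sqrt (\<beta> 0) \<le> h2_norm \<beta> f"
proof -
  have "(\<Sum>n\<in>{0}. (cmod (h2_coeff f n))\<^sup>2 * \<beta> n) \<le> (\<Sum>n. (cmod (h2_coeff f n))\<^sup>2 * \<beta> n)"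
    using assms by (intro sum_le_suminf) (auto simp: in_H2_def)
  then have "sqrt ((cmod (f 0))\<^sup>2 * \<beta> 0) \<le> h2_norm \<beta> f"
    by (simp add: h2_norm_def h2_coeff_def)
  then show ?thesis
    by (simp add: real_sqrt_mult)
qed

lemma comp_funpow_in_H2_norm_le:
  assumes "\<And>n. \<beta> n \<ge> 0" and "K \<ge> 0"
    and closed: "\<And>f. in_H2 \<beta> f \<Longrightarrow> in_H2 \<beta> (f \<circ> \<phi>)"
    and bound: "\<And>f. in_H2 \<beta> f \<Longrightarrow> h2_norm \<beta> (f \<circ> \<phi>) \<le> K * h2_norm \<beta> f"
    and f: "in_H2 \<beta> f"
  shows "in_H2 \<beta> (f \<circ> (\<phi> ^^ m)) \<and> h2_norm \<beta> (f \<circ> (\<phi> ^^ m)) \<le> K ^ m * h2_norm \<beta> f"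
proof (induction m)
  case 0
  then show ?case using f by simp
next
  case (Suc m)
  have eq: "f \<circ> (\<phi> ^^ Suc m) = (f \<circ> (\<phi> ^^ m)) \<circ> \<phi>"
    by (simp add: funpow_Suc_right o_assoc del: funpow.simps)
  have "h2_norm \<beta> (f \<circ> (\<phi> ^^ Suc m)) \<le> K * h2_norm \<beta> (f \<circ> (\<phi> ^^ m))"
    unfolding eq using Suc bound by blast
  also have "\<dots> \<le> K * (K ^ m * h2_norm \<beta> f)"
    using Suc.IH \<open>K \<ge> 0\<close> mult_left_mono by blast
  finally have "h2_norm \<beta> (f \<circ> (\<phi> ^^ Suc m)) \<le> K ^ Suc m * h2_norm \<beta> f"
    by (simp only: power_Suc mult.assoc)
  moreover have "in_H2 \<beta> (f \<circ> (\<phi> ^^ Suc m))"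
    unfolding eq using Suc.IH closed by blast
  ultimately show ?case
    by blast
qed

lemma bounded_comp_op_funpow:
  assumes "\<And>n. \<beta> n \<ge> 0" and "bounded_comp_op \<beta> \<phi>"
  obtains K :: real where "K > 1"
    and "\<And>f m. in_H2 \<beta> f \<Longrightarrow>
      in_H2 \<beta> (f \<circ> (\<phi> ^^ m)) \<and> h2_norm \<beta> (f \<circ> (\<phi> ^^ m)) \<le> K ^ m * h2_norm \<beta> f"
proof -
  obtain C where closed: "\<And>f. in_H2 \<beta> f \<Longrightarrow> in_H2 \<beta> (f \<circ> \<phi>)"
    and bound: "\<And>f. in_H2 \<beta> f \<Longrightarrow> h2_norm \<beta> (f \<circ> \<phi>) \<le> C * h2_norm \<beta> f"
    using assms(2) unfolding bounded_comp_op_def by blast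
  define K where "K = max C 2"
  have "h2_norm \<beta> (f \<circ> \<phi>) \<le> K * h2_norm \<beta> f" if "in_H2 \<beta> f" for f
    using bound[OF that] h2_norm_nonneg[OF assms(1) that] mult_right_mono[of C K]
    by (force simp: K_def)
  moreover have "K > 1"
    by (simp add: K_def)
  ultimately show ?thesis
    using comp_funpow_in_H2_norm_le[OF assms(1) _ closed] that by (meson less_le_trans zero_less_one less_imp_le)
qed

lemma T_aut_real_orbit_0:
  assumes "0 < a" and "a < 1"
  shows "\<exists>r. (T_aut (of_real a) ^^ m) 0 = of_real r \<and> 0 \<le> r \<and> r \<le> 1 \<and> 1 - r \<le> (1 - a) ^ m"
proof (induction m)
  case 0
  show ?case by simp
next
  case (Suc m)
  then obtain r where r: "(T_aut (of_real a) ^^ m) 0 = of_real r" "0 \<le> r" "r \<le> 1" "1 - r \<le> (1 - a) ^ m"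
    by blast
  define r' where "r' = (a + r) / (1 + a * r)"
  have den: "1 + a * r \<ge> 1"
    using assms r by simp
  have gap: "1 - r' = (1 - a) * (1 - r) / (1 + a * r)"
    using den by (simp add: r'_def field_simps)
  have "(1 - a) * (1 - r) / (1 + a * r) \<le> (1 - a) * (1 - r)"
    using divide_left_mono[of 1 "1 + a * r" "(1 - a) * (1 - r)"] den assms r by simp
  also have "\<dots> \<le> (1 - a) * (1 - a) ^ m"
    using assms r by (intro mult_left_mono) auto
  finally have "1 - r' \<le> (1 - a) ^ Suc m"
    using gap by simp
  moreover have "0 \<le> (1 - a) * (1 - r) / (1 + a * r)"
    using assms r den by simp
  moreover have "0 \<le> r'"
    using assms r den by (simp add: r'_def)
  moreover have "(T_aut (of_real a) ^^ Suc m) 0 = of_real r'"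
    using r by (simp add: T_aut_def r'_def)
  ultimately show ?case
    using gap by (intro exI[of _ r']) auto
qed

lemma half_le_power_if_close_to_1:
  fixes r :: real
  assumes "n \<ge> 1" and "1 - r \<le> 1 / (2 * real n)"
  shows "1 / 2 \<le> r ^ n"
proof -
  have "1 / (2 * real n) \<le> 1"
    using assms by simp
  then have "1 + real n * (r - 1) \<le> (1 + (r - 1)) ^ n"
    using assms(2) by (intro Bernoulli_inequality) linarith
  moreover have "real n * (r - 1) \<ge> real n * - (1 / (2 * real n))"
    using assms by (intro mult_left_mono) auto
  ultimately show ?thesis
    using assms by simp
qed

lemma polynomial_minorationI_exponential:
  fixes \<beta> :: "nat \<Rightarrow> real" and c K q :: real
  assumes "c > 0" and "K > 1" and "0 < q" and "q < 1"
    and bound: "\<And>n m. n \<ge> 1 \<Longrightarrow> q ^ m \<le> 1 / (2 * real n) \<Longrightarrow> c \<le> K ^ m * \<beta> n"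
  shows "polynomial_minoration \<beta>"
proof -
  define L where "L = - ln q"
  define \<alpha> where "\<alpha> = ln K / L"
  define \<delta> where "\<delta> = c / (K * 2 powr \<alpha>)"
  have "L > 0"
    using assms by (simp add: L_def)
  then have "\<alpha> > 0" and "\<delta> > 0"
    using assms by (simp_all add: \<alpha>_def \<delta>_def)
  have "\<delta> * real n powr (- \<alpha>) \<le> \<beta> n" if n: "n \<ge> 1" for n
  proof -
    define m where "m = nat \<lceil>ln (2 * real n) / L\<rceil>"
    have m_ge: "ln (2 * real n) / L \<le> m" and m_le: "m \<le> ln (2 * real n) / L + 1"
      using n \<open>L > 0\<close> by (auto simp: m_def of_nat_nat)
    have "q ^ m = exp (- (m * L))"
      using assms by (simp add: L_def exp_of_nat_mult)
    also have "\<dots> \<le> exp (- ln (2 * real n))"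
      using m_ge \<open>L > 0\<close> by (simp add: field_simps)
    also have "\<dots> = 1 / (2 * real n)"
      using n by (simp add: exp_minus inverse_eq_divide)
    finally have "c \<le> K ^ m * \<beta> n"
      using bound n by blast
    have "K ^ m = exp (m * ln K)"
      using assms by (simp add: exp_of_nat_mult)
    also have "\<dots> \<le> exp ((ln (2 * real n) / L + 1) * ln K)"
      using m_le assms by (intro exp_mono mult_right_mono) auto
    also have "\<dots> = K * (2 * real n) powr \<alpha>"
      using assms n by (simp add: powr_def exp_add algebra_simps \<alpha>_def)
    finally have "K ^ m \<le> K * (2 * real n) powr \<alpha>" .
    moreover have "0 < K ^ m * \<beta> n"
      using \<open>c \<le> K ^ m * \<beta> n\<close> \<open>c > 0\<close> by linarith
    then have "\<beta> n > 0"
      using \<open>K > 1\<close> by (simp add: zero_less_mult_iff)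
    ultimately have "c \<le> K * (2 * real n) powr \<alpha> * \<beta> n"
      using \<open>c \<le> K ^ m * \<beta> n\<close> by (meson mult_right_mono less_imp_le order_trans)
    then show ?thesis
      using assms n by (simp add: \<delta>_def powr_minus powr_mult field_simps)
  qed
  then show ?thesis
    unfolding polynomial_minoration_def using \<open>\<alpha> > 0\<close> \<open>\<delta> > 0\<close> by blast
qed

lemma weight_bound_from_T_aut_orbit:
  assumes "\<And>n. \<beta> n \<ge> 0" and "0 < a" and "a < 1"
    and iterate: "\<And>f m. in_H2 \<beta> f \<Longrightarrow> in_H2 \<beta> (f \<circ> (T_aut (of_real a) ^^ m)) \<and>
      h2_norm \<beta> (f \<circ> (T_aut (of_real a) ^^ m)) \<le> K ^ m * h2_norm \<beta> f"
    and "n \<ge> 1" and "(1 - a) ^ m \<le> 1 / (2 * real n)"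
  shows "\<beta> 0 / 4 \<le> (K\<^sup>2) ^ m * \<beta> n"
proof -
  obtain r where r: "(T_aut (of_real a) ^^ m) 0 = of_real r" "0 \<le> r" "1 - r \<le> (1 - a) ^ m"
    using T_aut_real_orbit_0[OF assms(2,3)] by blast
  have "1 / 2 * sqrt (\<beta> 0) \<le> r ^ n * sqrt (\<beta> 0)"
    using half_le_power_if_close_to_1[of n r] assms r by (intro mult_right_mono) auto
  also have "\<dots> \<le> K ^ m * sqrt (\<beta> n)"
    using h2_norm_ge_value_at_0[of \<beta> "(\<lambda>z. z ^ n) \<circ> (T_aut (of_real a) ^^ m)"] assms(1)
      iterate[OF in_H2_power, of n m] r
    by (simp add: h2_norm_power norm_power)
  finally have "(sqrt (\<beta> 0) / 2)\<^sup>2 \<le> (K ^ m * sqrt (\<beta> n))\<^sup>2"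
    by (intro power_mono) (simp_all add: assms(1))
  then show ?thesis
    using assms(1) by (simp add: power_mult_distrib power_divide power_mult[symmetric] mult.commute)
qed

theorem mainTheorem3:
  fixes \<beta> :: "nat \<Rightarrow> real" and a :: real
  assumes "\<And>n. \<beta> n > 0"
    and "liminf (\<lambda>n. ereal (root n (\<beta> n))) \<ge> 1"
    and "0 < a" and "a < 1"
    and "bounded_comp_op \<beta> (T_aut (complex_of_real a))"
  shows "polynomial_minoration \<beta>"
proof -
  have \<beta>_nonneg: "\<beta> n \<ge> 0" for n
    using assms(1) less_imp_le by blast
  obtain K where "K > 1" and iterate: "\<And>f m. in_H2 \<beta> f \<Longrightarrow>
      in_H2 \<beta> (f \<circ> (T_aut (of_real a) ^^ m)) \<and>
      h2_norm \<beta> (f \<circ> (T_aut (of_real a) ^^ m)) \<le> K ^ m * h2_norm \<beta> f"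
    using bounded_comp_op_funpow[OF \<beta>_nonneg assms(5)] by blast
  have weight_bound: "\<beta> 0 / 4 \<le> (K\<^sup>2) ^ m * \<beta> n"
    if "n \<ge> 1" and "(1 - a) ^ m \<le> 1 / (2 * real n)" for n m
    using weight_bound_from_T_aut_orbit[OF \<beta>_nonneg assms(3,4) iterate that] .
  have "K\<^sup>2 > 1"
    using \<open>K > 1\<close> by (simp add: one_less_power)
  then show ?thesis
    using polynomial_minorationI_exponential[where c = "\<beta> 0 / 4" and q = "1 - a", OF _ _ _ _ weight_bound]
      assms(1,3,4) by simp
qed

end
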